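(* For any positive integers $k\le n$, $$\frac{n(n+1)(n+2)}{(2,n)}\ \Big|\ (n+k+1)\binom{n+k}{k}\binom{n+1}{k+1}\binom{2k}{k+1},$$ where $(2,n)$ is the greatest common divisor of $2$ and $n$. *)

theory Defs
  imports Main
begin

end

theory Submission
  imports Defs
begin

text \<open>Write the right-hand side as \<open>B C(2k,k+1)\<close> with \<open>B = (n+k+1) C(n+k,k) C(n+1,k+1)\<close>.
  The absorption identity \<open>(k+1) C(2k,k+1) = k C(2k,k)\<close> shows \<open>k | C(2k,k+1)\<close>, so it suffices
  that \<open>(n+1) lcm(n, n+2)\<close> divides \<open>k B\<close>; this product is the left-hand side because
  \<open>gcd(n, n+2) = gcd(2, n)\<close>. Absorption rewrites \<open>B\<close> both as \<open>(n+1) C(n+k+1,k+1) C(n,k)\<close>, where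
  \<open>n | k C(n,k)\<close>, and as \<open>(n+1) C(n+k+1,k) C(n+1,k+1)\<close>, where \<open>n+2 | k C(n+k+1,k)\<close>. Finally
  \<open>n+1\<close> is coprime to \<open>n\<close> and to \<open>n+2\<close>.\<close>

declare binomial_Suc_Suc [simp del]

lemma dvd_times_binomial: "(n::nat) dvd k * (n choose k)"
proof (cases "n = 0 \<or> k = 0")
  case False
  then obtain p j where "n = Suc p" "k = Suc j"
    by (metis not0_implies_Suc)
  then show ?thesis
    using Suc_times_binomial_eq[of p j] by (metis dvd_triv_left mult.commute)
qed auto

lemma dvd_binomial_double_Suc: "(k::nat) dvd (2 * k choose Suc k)"
proof (cases k)
  case (Suc j)
  have "Suc (k + j) = 2 * k"
    using Suc by simp
  then have "Suc k * (2 * k choose Suc k) = k * (2 * k choose k)"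
    using Suc_times_binomial_add[of k j] unfolding Suc[symmetric] by metis
  then have "k dvd Suc k * (2 * k choose Suc k)"
    by (metis dvd_triv_left)
  moreover have "coprime k (Suc k)"
    by simp
  ultimately show ?thesis
    by (simp only: coprime_dvd_mult_right_iff)
qed simp

lemma Suc_dvd_times_binomial: "Suc m dvd k * (m + k choose k)"
proof -
  have "Suc m * (Suc (m + k) choose Suc m) = (Suc m + k) * (m + k choose k)"
    using Suc_times_binomial_eq[of "m + k" m] binomial_symmetric[of k "m + k"]
    by (simp only: mult.commute add_Suc) simp
  then have "Suc m dvd Suc m * (m + k choose k) + k * (m + k choose k)"
    by (metis add_mult_distrib dvd_triv_left)
  then show ?thesis
    by (metis dvd_add_right_iff dvd_triv_left)
qed

lemma Suc_add_times_binomial: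
  "Suc (n + k) * (n + k choose k) = Suc n * (Suc (n + k) choose k)"
  using binomial_absorb_comp[of "Suc (n + k)" k] by simp

lemma Suc_add_times_binomial_times_binomial:
  "Suc (n + k) * (n + k choose k) * (Suc n choose Suc k)
     = Suc n * (Suc (n + k) choose Suc k) * (n choose k)"
proof -
  have "Suc (n + k) * (n + k choose k) * (Suc n choose Suc k)
      = (Suc (n + k) choose Suc k) * (Suc k * (Suc n choose Suc k))"
    by (simp only: Suc_times_binomial_eq mult.assoc)
  also have "\<dots> = Suc n * (Suc (n + k) choose Suc k) * (n choose k)"
    by (simp only: Suc_times_binomial ac_simps)
  finally show ?thesis .
qed

lemma lcm_add2_mult_gcd: "lcm n (n + 2) * gcd 2 n = (n::nat) * (n + 2)"
proof -
  have "gcd n (n + 2) = gcd 2 n"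
    by (simp only: gcd_add2 gcd.commute)
  then show ?thesis
    using lcm_mult_gcd[of n "n + 2"] by simp
qed

lemma coprime_Suc_lcm: "coprime (Suc n) (lcm n (n + 2))"
proof -
  have "coprime (Suc n) n" "coprime (Suc n) (n + 2)"
    by simp_all
  then have "coprime (Suc n) (n * (n + 2))"
    by (simp only: coprime_mult_right_iff)
  moreover have "lcm n (n + 2) dvd n * (n + 2)"
    by (intro lcm_least dvd_triv_left dvd_triv_right)
  ultimately show ?thesis
    by (metis coprime_divisors dvd_refl)
qed

theorem lemma4p2:
  fixes n k :: nat
  assumes "1 \<le> k" and "k \<le> n"
  shows "(n * (n + 1) * (n + 2)) div gcd 2 n dvd
           (n + k + 1) * (n + k choose k) * (n + 1 choose (k + 1)) * (2 * k choose (k + 1))"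
proof -
  have lhs_eq: "n * (n + 1) * (n + 2) div gcd 2 n = Suc n * lcm n (n + 2)"
  proof -
    have "n * (n + 1) * (n + 2) = Suc n * lcm n (n + 2) * gcd 2 n"
      by (simp only: mult.assoc lcm_add2_mult_gcd) (simp only: Suc_eq_plus1 ac_simps)
    then show ?thesis
      by simp
  qed
  define B where "B = Suc (n + k) * (n + k choose k) * (Suc n choose Suc k)"
  have kB_via_n_choose: "k * B = k * (n choose k) * (Suc n * (Suc (n + k) choose Suc k))"
    unfolding B_def Suc_add_times_binomial_times_binomial by (simp only: ac_simps)
  have kB_via_add_choose: "k * B = k * (Suc n + k choose k) * (Suc n * (Suc n choose Suc k))"
    unfolding B_def Suc_add_times_binomial add_Suc by (simp only: ac_simps)
  have "n dvd k * B"
    unfolding kB_via_n_choose by (rule dvd_mult2) (rule dvd_times_binomial)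
  moreover have "n + 2 dvd k * B"
    unfolding kB_via_add_choose add_2_eq_Suc' by (rule dvd_mult2) (rule Suc_dvd_times_binomial)
  ultimately have "lcm n (n + 2) dvd k * B"
    by (rule lcm_least)
  with coprime_Suc_lcm have "Suc n * lcm n (n + 2) dvd k * B"
    unfolding kB_via_n_choose by (metis divides_mult dvd_mult dvd_triv_left)
  also have "\<dots> dvd (2 * k choose Suc k) * B"
    using dvd_binomial_double_Suc[of k] by (rule mult_dvd_mono) simp
  also have "\<dots> = (n + k + 1) * (n + k choose k) * (n + 1 choose (k + 1)) * (2 * k choose (k + 1))"
    unfolding B_def Suc_eq_plus1 by (simp only: ac_simps)
  finally show ?thesis
    unfolding lhs_eq .
qed

end
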